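(* Let $X$ be a geodesic metric space, $e\in X$ and $N$ a Morse gauge. Then $X^{(N)}_e$, with the metric restricted from $X$, is $8N(3,0)$-hyperbolic, i.e. $(x\cdot y)_w\ge\min\{(x\cdot z)_w,(z\cdot y)_w\}-8N(3,0)$ for all $w,x,y,z\in X^{(N)}_e$.
   Context: A Morse gauge is a function $N$ assigning to each $(K,C)$ ($K\ge1,C\ge0$) a number $N(K,C)\ge0$. A geodesic $\gamma$ is $N$-Morse if every $(K,C)$-quasi-geodesic with endpoints on $\gamma$ lies in the $N(K,C)$-neighbourhood of $\gamma$. $X^{(N)}_e$ is the set of $y\in X$ such that some geodesic from $e$ to $y$ is $N$-Morse. The Gromov product is $(x\cdot y)_w=\frac12(d(w,x)+d(w,y)-d(x,y))$. *)

theory Defs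
  imports "HOL-Analysis.Analysis"
begin

definition geodesic_from :: "(real \<Rightarrow> 'a::metric_space) \<Rightarrow> 'a \<Rightarrow> 'a \<Rightarrow> bool" where
  "geodesic_from g x y \<longleftrightarrow> g 0 = x \<and> g (dist x y) = y \<and>
     (\<forall>s\<in>{0..dist x y}. \<forall>t\<in>{0..dist x y}. dist (g s) (g t) = \<bar>s - t\<bar>)"

definition geodesic_space :: "'a::metric_space itself \<Rightarrow> bool" where
  "geodesic_space _ \<longleftrightarrow> (\<forall>x y::'a. \<exists>g. geodesic_from g x y)"

definition quasi_geodesic :: "real \<Rightarrow> real \<Rightarrow> (real \<Rightarrow> 'a::metric_space) \<Rightarrow> real \<Rightarrow> real \<Rightarrow> bool" where
  "quasi_geodesic K C q a b \<longleftrightarrow> a \<le> b \<and>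
     (\<forall>s\<in>{a..b}. \<forall>t\<in>{a..b}.
        \<bar>s - t\<bar> / K - C \<le> dist (q s) (q t) \<and> dist (q s) (q t) \<le> K * \<bar>s - t\<bar> + C)"

definition morse_gauge :: "(real \<Rightarrow> real \<Rightarrow> real) \<Rightarrow> bool" where
  "morse_gauge N \<longleftrightarrow> (\<forall>K C. K \<ge> 1 \<longrightarrow> C \<ge> 0 \<longrightarrow> N K C \<ge> 0)"

definition N_Morse_geodesic :: "(real \<Rightarrow> real \<Rightarrow> real) \<Rightarrow> (real \<Rightarrow> 'a::metric_space) \<Rightarrow> 'a \<Rightarrow> 'a \<Rightarrow> bool" where
  "N_Morse_geodesic N g x y \<longleftrightarrow> geodesic_from g x y \<and>
     (\<forall>K C (q::real \<Rightarrow> 'a) a b. K \<ge> 1 \<longrightarrow> C \<ge> 0 \<longrightarrow> quasi_geodesic K C q a b \<longrightarrow>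
        q a \<in> g ` {0..dist x y} \<longrightarrow> q b \<in> g ` {0..dist x y} \<longrightarrow>
        (\<forall>t\<in>{a..b}. \<exists>s\<in>{0..dist x y}. dist (q t) (g s) \<le> N K C))"

definition morse_stratum :: "(real \<Rightarrow> real \<Rightarrow> real) \<Rightarrow> 'a::metric_space \<Rightarrow> 'a set" where
  "morse_stratum N e = {y. \<exists>g. N_Morse_geodesic N g e y}"

definition gromov_product :: "'a::metric_space \<Rightarrow> 'a \<Rightarrow> 'a \<Rightarrow> real" where
  "gromov_product w x y = (dist w x + dist w y - dist x y) / 2"

end

theory Submission
  imports Defs
begin

text \<open>Let \<open>p\<close> be a point of a geodesic \<open>[x,y]\<close> nearest to \<open>e\<close>. Following a geodesic from \<open>e\<close>
  to \<open>p\<close> and then \<open>[p,x]\<close> is a (3,0)-quasi-geodesic, so the Morse property keeps \<open>[e,p]\<close>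
  within \<open>2N(3,0)\<close> of an \<open>N\<close>-Morse geodesic \<open>[e,x]\<close> up to time \<open>(x\<cdot>y)\<^sub>e \<le> d(e,p)\<close>, and
  likewise for \<open>y\<close>. Hence \<open>N\<close>-Morse geodesics from \<open>e\<close> to \<open>x\<close> and \<open>y\<close> stay \<open>4N(3,0)\<close>-close
  up to time \<open>(x\<cdot>y)\<^sub>e\<close>, which makes the Gromov products based at \<open>e\<close> satisfy the
  \<open>4N(3,0)\<close>-hyperbolicity inequality; moving the base point doubles the constant.\<close>

lemma geodesic_from_dist:
  assumes "geodesic_from g x y" "s \<in> {0..dist x y}" "t \<in> {0..dist x y}"
  shows "dist (g s) (g t) = \<bar>s - t\<bar>"
  using assms unfolding geodesic_from_def by blast

lemma geodesic_from_endpoints: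
  assumes "geodesic_from g x y"
  shows "g 0 = x" "g (dist x y) = y"
  using assms unfolding geodesic_from_def by auto

lemma dist_start_geodesic_from:
  assumes "geodesic_from g x y" "s \<in> {0..dist x y}"
  shows "dist x (g s) = s"
  using geodesic_from_dist[OF assms(1), of 0 s] assms geodesic_from_endpoints[OF assms(1)] by auto

lemma dist_geodesic_from_end:
  assumes "geodesic_from g x y" "s \<in> {0..dist x y}"
  shows "dist (g s) y = dist x y - s"
  using geodesic_from_dist[OF assms(1), of s "dist x y"] assms geodesic_from_endpoints[OF assms(1)]
  by auto

lemma continuous_on_geodesic_from:
  assumes "geodesic_from g x y"
  shows "continuous_on {0..dist x y} g"
  unfolding continuous_on_iff
proof (intro ballI allI impI)
  fix s \<epsilon> :: real assume "s \<in> {0..dist x y}" "0 < \<epsilon>"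
  then show "\<exists>d>0. \<forall>t\<in>{0..dist x y}. dist t s < d \<longrightarrow> dist (g t) (g s) < \<epsilon>"
    using geodesic_from_dist[OF assms] by (intro exI[of _ \<epsilon>]) (auto simp: dist_real_def)
qed

lemma geodesic_from_reverse_initial_segment:
  assumes "geodesic_from \<gamma> x y" "r \<in> {0..dist x y}"
  shows "geodesic_from (\<lambda>t. \<gamma> (r - t)) (\<gamma> r) x"
proof -
  have "dist (\<gamma> r) x = r"
    using dist_start_geodesic_from[OF assms] by (simp add: dist_commute)
  then show ?thesis
    using assms geodesic_from_dist[OF assms(1)] geodesic_from_endpoints[OF assms(1)]
    unfolding geodesic_from_def[of _ "\<gamma> r"] by auto
qed

lemma geodesic_from_final_segment:
  assumes "geodesic_from \<gamma> x y" "r \<in> {0..dist x y}"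
  shows "geodesic_from (\<lambda>t. \<gamma> (r + t)) (\<gamma> r) y"
proof -
  have "dist (\<gamma> r) y = dist x y - r"
    using dist_geodesic_from_end[OF assms] .
  then show ?thesis
    using assms geodesic_from_dist[OF assms(1)] geodesic_from_endpoints[OF assms(1)]
    unfolding geodesic_from_def[of _ "\<gamma> r"] by auto
qed

lemma gromov_product_commute: "gromov_product w x y = gromov_product w y x"
  unfolding gromov_product_def by (simp add: dist_commute)

lemma gromov_product_nonneg: "gromov_product w x y \<ge> 0"
  unfolding gromov_product_def using dist_triangle[of x y w] by (simp add: dist_commute)

lemma gromov_product_le_dist: "gromov_product w x y \<le> dist w x"
  unfolding gromov_product_def using dist_triangle[of w y x] by (simp add: dist_commute)

lemma gromov_product_le_dist_to_geodesic:
  assumes "geodesic_from \<gamma> x y" "r \<in> {0..dist x y}"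
  shows "gromov_product e x y \<le> dist e (\<gamma> r)"
proof -
  have "dist (\<gamma> r) x = r" "dist (\<gamma> r) y = dist x y - r"
    using dist_start_geodesic_from[OF assms] dist_geodesic_from_end[OF assms]
    by (auto simp: dist_commute)
  then show ?thesis
    using dist_triangle[of e x "\<gamma> r"] dist_triangle[of e y "\<gamma> r"]
    unfolding gromov_product_def by simp
qed

lemma gromov_product_change_base:
  "gromov_product w x y =
     gromov_product e x y - gromov_product e x w - gromov_product e y w + dist e w"
  unfolding gromov_product_def by (simp add: dist_commute field_simps)

text \<open>The constant 3 comes from the nearest-point property: for \<open>s \<le> d(e,p) < t\<close> the
  points \<open>g s\<close> and \<open>h (t - d(e,p))\<close> are at distance at least \<open>(t - s)/3\<close>, since otherwise
  \<open>h (t - d(e,p))\<close> would be closer to \<open>e\<close> than \<open>p\<close> is.\<close>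
lemma quasi_geodesic_through_nearest_point:
  assumes g: "geodesic_from g e p" and h: "geodesic_from h p x"
    and nearest: "\<forall>t\<in>{0..dist p x}. dist e p \<le> dist e (h t)"
  shows "quasi_geodesic 3 0 (\<lambda>s. if s \<le> dist e p then g s else h (s - dist e p))
           0 (dist e p + dist p x)"
proof -
  define D where "D = dist e p"
  define q where "q = (\<lambda>s. if s \<le> D then g s else h (s - D))"
  have across: "(t - s)/3 \<le> dist (g s) (h (t - D)) \<and> dist (g s) (h (t - D)) \<le> t - s"
    if "0 \<le> s" "s \<le> D" "D < t" "t \<le> D + dist p x" for s t
  proof -
    have "dist (g s) p = D - s"
      using geodesic_from_dist[OF g, of s D] that geodesic_from_endpoints[OF g] unfolding D_def by auto
    moreover have "dist p (h (t - D)) = t - D"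
      using dist_start_geodesic_from[OF h, of "t - D"] that by auto
    moreover have "dist e (g s) = s" "D \<le> dist e (h (t - D))"
      using dist_start_geodesic_from[OF g, of s] nearest that unfolding D_def by auto
    ultimately show ?thesis
      using dist_triangle[of e "h (t - D)" "g s"] dist_triangle[of p "h (t - D)" "g s"]
        dist_triangle[of "g s" "h (t - D)" p]
      by (simp add: dist_commute)
  qed
  have "\<bar>s - t\<bar> / 3 \<le> dist (q s) (q t) \<and> dist (q s) (q t) \<le> 3 * \<bar>s - t\<bar>"
    if "s \<in> {0..D + dist p x}" "t \<in> {0..D + dist p x}" for s t
  proof (cases "s \<le> D"; cases "t \<le> D")
    assume "s \<le> D" "t \<le> D"
    then show ?thesis using geodesic_from_dist[OF g, of s t] that unfolding q_def D_def by auto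
  next
    assume "\<not> s \<le> D" "\<not> t \<le> D"
    then show ?thesis using geodesic_from_dist[OF h, of "s - D" "t - D"] that unfolding q_def by auto
  next
    assume "s \<le> D" "\<not> t \<le> D"
    then show ?thesis using across[of s t] that unfolding q_def by auto
  next
    assume "\<not> s \<le> D" "t \<le> D"
    then show ?thesis using across[of t s] that unfolding q_def by (auto simp: dist_commute)
  qed
  then show ?thesis
    unfolding quasi_geodesic_def q_def D_def by auto
qed

lemma N_Morse_geodesic_close_to_nearest_point_geodesic:
  assumes \<alpha>: "N_Morse_geodesic N \<alpha> e x"
    and g: "geodesic_from g e p" and h: "geodesic_from h p x"
    and nearest: "\<forall>t\<in>{0..dist p x}. dist e p \<le> dist e (h t)"
    and s: "0 \<le> s" "s \<le> dist e p" "s \<le> dist e x"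
  shows "dist (g s) (\<alpha> s) \<le> 2 * N 3 0"
proof -
  define D where "D = dist e p"
  define q where "q = (\<lambda>s. if s \<le> D then g s else h (s - D))"
  have geo_\<alpha>: "geodesic_from \<alpha> e x"
    using \<alpha> unfolding N_Morse_geodesic_def by blast
  note ends_g = geodesic_from_endpoints[OF g] and ends_h = geodesic_from_endpoints[OF h]
    and ends_\<alpha> = geodesic_from_endpoints[OF geo_\<alpha>]
  have "q 0 \<in> \<alpha> ` {0..dist e x}"
    using ends_g ends_\<alpha> unfolding q_def D_def by (auto intro!: image_eqI[of _ _ 0])
  moreover have "q (D + dist p x) \<in> \<alpha> ` {0..dist e x}"
    using ends_g ends_h ends_\<alpha> unfolding q_def D_def
    by (cases "dist p x = 0") (auto intro!: image_eqI[of _ _ "dist e x"])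
  moreover have "quasi_geodesic 3 0 q 0 (D + dist p x)"
    using quasi_geodesic_through_nearest_point[OF g h nearest] unfolding q_def D_def .
  ultimately have "\<forall>t\<in>{0..D + dist p x}. \<exists>\<sigma>\<in>{0..dist e x}. dist (q t) (\<alpha> \<sigma>) \<le> N 3 0"
    using \<alpha> unfolding N_Morse_geodesic_def by simp
  moreover have "s \<in> {0..D + dist p x}"
    using s zero_le_dist[of p x] unfolding D_def atLeastAtMost_iff by linarith
  ultimately obtain \<sigma> where \<sigma>: "\<sigma> \<in> {0..dist e x}" "dist (q s) (\<alpha> \<sigma>) \<le> N 3 0"
    by blast
  have "q s = g s"
    using s unfolding q_def D_def by simp
  with \<sigma>(2) have close: "dist (g s) (\<alpha> \<sigma>) \<le> N 3 0"
    by simp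
  text \<open>Both \<open>g s\<close> and \<open>\<alpha> \<sigma>\<close> lie on geodesics from \<open>e\<close>, so \<open>|s - \<sigma>| \<le> dist (g s) (\<alpha> \<sigma>)\<close>.\<close>
  have "dist e (g s) = s" "dist e (\<alpha> \<sigma>) = \<sigma>" "dist (\<alpha> \<sigma>) (\<alpha> s) = \<bar>\<sigma> - s\<bar>"
    using dist_start_geodesic_from[OF g, of s] dist_start_geodesic_from[OF geo_\<alpha>, of \<sigma>]
      geodesic_from_dist[OF geo_\<alpha>, of \<sigma> s] \<sigma>(1) s by auto
  then show ?thesis
    using close dist_triangle[of e "g s" "\<alpha> \<sigma>"] dist_triangle[of e "\<alpha> \<sigma>" "g s"]
      dist_triangle[of "g s" "\<alpha> s" "\<alpha> \<sigma>"]
    by (auto simp: dist_commute)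
qed

lemma N_Morse_geodesics_fellow_travel:
  fixes \<alpha> \<beta> :: "real \<Rightarrow> 'a::metric_space"
  assumes G: "geodesic_space TYPE('a)"
    and \<alpha>: "N_Morse_geodesic N \<alpha> e x" and \<beta>: "N_Morse_geodesic N \<beta> e y"
    and s: "0 \<le> s" "s \<le> gromov_product e x y"
  shows "dist (\<alpha> s) (\<beta> s) \<le> 4 * N 3 0"
proof -
  obtain \<gamma> where \<gamma>: "geodesic_from \<gamma> x y"
    using G unfolding geodesic_space_def by blast
  have "continuous_on {0..dist x y} (\<lambda>r. dist e (\<gamma> r))"
    using continuous_on_geodesic_from[OF \<gamma>] by (intro continuous_intros)
  then obtain r where r: "r \<in> {0..dist x y}"
    and r_min: "\<forall>r'\<in>{0..dist x y}. dist e (\<gamma> r) \<le> dist e (\<gamma> r')"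
    using continuous_attains_inf[of "{0..dist x y}" "\<lambda>r. dist e (\<gamma> r)"] by auto
  obtain g where g: "geodesic_from g e (\<gamma> r)"
    using G unfolding geodesic_space_def by blast
  have s_bounds: "s \<le> dist e (\<gamma> r)" "s \<le> dist e x" "s \<le> dist e y"
    using s gromov_product_le_dist_to_geodesic[OF \<gamma> r, of e]
      gromov_product_le_dist[of e x y] gromov_product_le_dist[of e y x] gromov_product_commute[of e x y]
    by linarith+
  have "dist (\<gamma> r) x = r" "dist (\<gamma> r) y = dist x y - r"
    using dist_start_geodesic_from[OF \<gamma> r] dist_geodesic_from_end[OF \<gamma> r]
    by (simp_all add: dist_commute)
  then have "dist (g s) (\<alpha> s) \<le> 2 * N 3 0" "dist (g s) (\<beta> s) \<le> 2 * N 3 0"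
    using N_Morse_geodesic_close_to_nearest_point_geodesic[OF \<alpha> g
        geodesic_from_reverse_initial_segment[OF \<gamma> r]]
      N_Morse_geodesic_close_to_nearest_point_geodesic[OF \<beta> g
        geodesic_from_final_segment[OF \<gamma> r]] r r_min s s_bounds
    by simp_all
  then show ?thesis
    using dist_triangle[of "\<alpha> s" "\<beta> s" "g s"] by (simp add: dist_commute)
qed

lemma morse_stratum_gromov_hyperbolic_at_base:
  fixes e :: "'a::metric_space"
  assumes G: "geodesic_space TYPE('a)"
    and "x \<in> morse_stratum N e" "y \<in> morse_stratum N e" "z \<in> morse_stratum N e"
  shows "gromov_product e x y \<ge> min (gromov_product e x z) (gromov_product e z y) - 4 * N 3 0"
proof -
  obtain \<alpha> \<beta> \<zeta> where \<alpha>: "N_Morse_geodesic N \<alpha> e x" and \<beta>: "N_Morse_geodesic N \<beta> e y"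
    and \<zeta>: "N_Morse_geodesic N \<zeta> e z"
    using assms(2-4) unfolding morse_stratum_def by blast
  have geo_\<alpha>: "geodesic_from \<alpha> e x" and geo_\<beta>: "geodesic_from \<beta> e y"
    using \<alpha> \<beta> unfolding N_Morse_geodesic_def by blast+
  define m where "m = min (gromov_product e x z) (gromov_product e z y)"
  have m: "0 \<le> m" "m \<le> dist e x" "m \<le> dist e y"
    using gromov_product_nonneg[of e x z] gromov_product_nonneg[of e z y]
      gromov_product_le_dist[of e x z] gromov_product_le_dist[of e y z] gromov_product_commute[of e z y]
    unfolding m_def by linarith+
  have "dist (\<alpha> m) (\<zeta> m) \<le> 4 * N 3 0" "dist (\<zeta> m) (\<beta> m) \<le> 4 * N 3 0"
    using N_Morse_geodesics_fellow_travel[OF G \<alpha> \<zeta>, of m] N_Morse_geodesics_fellow_travel[OF G \<zeta> \<beta>, of m]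
      m(1) unfolding m_def by auto
  moreover have "dist x (\<alpha> m) = dist e x - m" "dist (\<beta> m) y = dist e y - m"
    using dist_geodesic_from_end[OF geo_\<alpha>, of m] dist_geodesic_from_end[OF geo_\<beta>, of m] m
    by (auto simp: dist_commute)
  moreover have "dist x y \<le> dist x (\<alpha> m) + dist (\<alpha> m) (\<zeta> m) + dist (\<zeta> m) (\<beta> m) + dist (\<beta> m) y"
    using dist_triangle[of x y "\<alpha> m"] dist_triangle[of "\<alpha> m" y "\<zeta> m"]
      dist_triangle[of "\<zeta> m" y "\<beta> m"] by linarith
  ultimately show ?thesis
    unfolding gromov_product_def[of e x y] m_def[symmetric] by (simp add: field_simps)
qed

lemma gromov_hyperbolic_change_base:
  fixes S :: "'a::metric_space set"
  assumes hyp: "\<And>x y z. x \<in> S \<Longrightarrow> y \<in> S \<Longrightarrow> z \<in> S \<Longrightarrow>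
      gromov_product e x y \<ge> min (gromov_product e x z) (gromov_product e z y) - \<delta>"
    and "\<delta> \<ge> 0" and "w \<in> S" "x \<in> S" "y \<in> S" "z \<in> S"
  shows "gromov_product w x y \<ge> min (gromov_product w x z) (gromov_product w z y) - 2 * \<delta>"
proof -
  have "\<And>a b c. a \<in> {w, x, y, z} \<Longrightarrow> b \<in> {w, x, y, z} \<Longrightarrow> c \<in> {w, x, y, z} \<Longrightarrow>
      gromov_product e a b \<ge> min (gromov_product e a c) (gromov_product e c b) - \<delta>"
    using hyp assms(3-6) by blast
  then show ?thesis
    using \<open>\<delta> \<ge> 0\<close> gromov_product_change_base[of w x y e] gromov_product_change_base[of w x z e]
      gromov_product_change_base[of w z y e]
    by (simp add: gromov_product_commute[of e _ w] gromov_product_commute[of e y z] min_def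
        split: if_splits; smt (verit))
qed

theorem proposition3p2:
  fixes e :: "'a::metric_space" and N :: "real \<Rightarrow> real \<Rightarrow> real"
  assumes "geodesic_space TYPE('a)"
    and "morse_gauge N"
  shows "\<forall>w\<in>morse_stratum N e. \<forall>x\<in>morse_stratum N e. \<forall>y\<in>morse_stratum N e.
           \<forall>z\<in>morse_stratum N e.
           gromov_product w x y \<ge> min (gromov_product w x z) (gromov_product w z y) - 8 * N 3 0"
proof (intro ballI)
  fix w x y z assume "w \<in> morse_stratum N e" "x \<in> morse_stratum N e"
    "y \<in> morse_stratum N e" "z \<in> morse_stratum N e"
  moreover have "N 3 0 \<ge> 0"
    using \<open>morse_gauge N\<close> unfolding morse_gauge_def by simp
  ultimately show "gromov_product w x y \<ge> min (gromov_product w x z) (gromov_product w z y) - 8 * N 3 0"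
    using gromov_hyperbolic_change_base[of "morse_stratum N e" e "4 * N 3 0"]
      morse_stratum_gromov_hyperbolic_at_base[OF \<open>geodesic_space TYPE('a)\<close>]
    by simp
qed

end
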